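(* For every $d\ge1$ and every unlabeled pool $S_u\subseteq\mathbb{R}_+^d$ of size $m$, the auditing complexity of $S_u$ with respect to $\mathcal{H}_\Box$ is at most $d$.
   Context: For $\mathbf a\in\mathbb{R}_+^d$, $h_{\mathbf a}(x)=2\mathbb{I}[\exists i\in[d],\ x[i]\ge a[i]]-1$, and $\mathcal{H}_\Box=\{h_{\mathbf a}:\mathbf a\in\mathbb{R}_+^d\}$ (points outside the "rectangle" are positive). The auditing complexity of a finite unlabeled pool $S_u$ with respect to a class $\mathcal{H}$ is the minimum, over algorithms that sequentially query labels of points of $S_u$ and that for every labeling of $S_u$ consistent with some $h\in\mathcal{H}$ output (with probability 1) a hypothesis with zero error on the labeled pool, of the worst case (over such labelings) number of queried points whose label is $-1$. *)

theory Defs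
  imports "HOL-Analysis.Analysis" "HOL-Library.Extended_Nat"
begin

definition h_box :: "real ^ 'd \<Rightarrow> real ^ 'd \<Rightarrow> int" where
  "h_box a x = (if \<exists>i. x $ i \<ge> a $ i then 1 else -1)"

definition H_box :: "(real ^ 'd \<Rightarrow> int) set" where
  "H_box = {h_box a | a. \<forall>i. a $ i \<ge> 0}"

text \<open>A deterministic adaptive auditing algorithm: given the history of queried
points and their labels, it either queries a point or stops and outputs a hypothesis.\<close>

datatype ('x, 'h) action = Query 'x | Output 'h

type_synonym ('x, 'h) algorithm = "('x \<times> int) list \<Rightarrow> ('x, 'h) action"

fun run :: "('x, 'h) algorithm \<Rightarrow> ('x \<Rightarrow> int) \<Rightarrow> nat \<Rightarrow> ('x \<times> int) list
            \<Rightarrow> ('h \<times> ('x \<times> int) list) option" where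
  "run A L 0 hist = None"
| "run A L (Suc n) hist =
     (case A hist of
        Output h \<Rightarrow> Some (h, hist)
      | Query x \<Rightarrow> run A L n (hist @ [(x, L x)]))"

definition consistent_labelings :: "('x \<Rightarrow> int) set \<Rightarrow> 'x set \<Rightarrow> ('x \<Rightarrow> int) set" where
  "consistent_labelings H S = {L. \<exists>h\<in>H. \<forall>x\<in>S. L x = h x}"

definition valid_auditor :: "('x \<Rightarrow> int) set \<Rightarrow> 'x set \<Rightarrow> ('x, 'x \<Rightarrow> int) algorithm \<Rightarrow> bool" where
  "valid_auditor H S A \<longleftrightarrow>
     (\<forall>L\<in>consistent_labelings H S. \<exists>n h hist.
        run A L n [] = Some (h, hist) \<and> set (map fst hist) \<subseteq> S \<and>
        h \<in> H \<and> (\<forall>x\<in>S. h x = L x))"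

definition audit_cost :: "('x, 'h) algorithm \<Rightarrow> ('x \<Rightarrow> int) \<Rightarrow> nat" where
  "audit_cost A L = card {x. \<exists>n h hist. run A L n [] = Some (h, hist) \<and> (x, -1) \<in> set hist}"

definition auditing_complexity :: "('x \<Rightarrow> int) set \<Rightarrow> 'x set \<Rightarrow> enat" where
  "auditing_complexity H S =
     (INF A \<in> {A. valid_auditor H S A}. SUP L \<in> consistent_labelings H S. enat (audit_cost A L))"

end

theory Submission
  imports Defs
begin

text \<open>Call a coordinate \<open>j\<close> settled once no unqueried point exceeds, in coordinate \<open>j\<close>,
  every negatively labelled point queried so far. The auditor repeatedly picks an unsettled
  coordinate \<open>j\<close> and queries, among the points witnessing this, one with the largest
  \<open>j\<close>-th coordinate. If the answer is negative, no remaining point can beat it in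
  coordinate \<open>j\<close>, so \<open>j\<close> becomes settled for good: every negative answer settles a fresh
  coordinate, and there are at most \<open>d\<close> of them. When all coordinates are settled, every
  unqueried point is dominated in each coordinate by some negative point; since the
  positive region of \<open>h_box a\<close> is upward closed in each coordinate, all unqueried points
  are negative, so the labelling of the pool is known.\<close>

definition neg_points :: "('x \<times> int) list \<Rightarrow> 'x set" where
  "neg_points hist = {x. (x, -1) \<in> set hist}"

lemma finite_neg_points: "finite (neg_points hist)"
proof (rule finite_subset)
  show "neg_points hist \<subseteq> fst ` set hist"
    by (force simp: neg_points_def)
qed simp

lemma run_Some_unique:
  "run A L n hist = Some r \<Longrightarrow> run A L n' hist = Some r' \<Longrightarrow> r = r'"
proof (induction n arbitrary: n' hist)
  case 0
  then show ?case by simp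
next
  case (Suc n)
  then obtain n'' where "n' = Suc n''"
    by (cases n') auto
  with Suc show ?case
    by (cases "A hist") auto
qed

lemma audit_cost_eq_card_neg_points:
  assumes "run A L n [] = Some (h, hist)"
  shows "audit_cost A L = card (neg_points hist)"
proof -
  have "{x. \<exists>n h hist. run A L n [] = Some (h, hist) \<and> (x, -1) \<in> set hist} = neg_points hist"
    using run_Some_unique[OF assms] assms unfolding neg_points_def by (auto; metis prod.inject)
  then show ?thesis
    by (simp add: audit_cost_def)
qed

lemma auditing_complexity_le_enat:
  assumes "\<And>L. L \<in> consistent_labelings H S \<Longrightarrow> \<exists>n h hist.
      run A L n [] = Some (h, hist) \<and> set (map fst hist) \<subseteq> S \<and> h \<in> H \<and>
      (\<forall>x\<in>S. h x = L x) \<and> card (neg_points hist) \<le> k"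
  shows "auditing_complexity H S \<le> enat k"
proof -
  have "valid_auditor H S A"
    unfolding valid_auditor_def using assms by blast
  then have "auditing_complexity H S \<le> (SUP L \<in> consistent_labelings H S. enat (audit_cost A L))"
    unfolding auditing_complexity_def by (intro INF_lower) simp
  also have "\<dots> \<le> enat k"
  proof (rule SUP_least)
    fix L assume "L \<in> consistent_labelings H S"
    then obtain n h hist where "run A L n [] = Some (h, hist)" "card (neg_points hist) \<le> k"
      using assms by blast
    then show "enat (audit_cost A L) \<le> enat k"
      by (simp add: audit_cost_eq_card_neg_points)
  qed
  finally show ?thesis .
qed

definition candidate :: "(real ^ 'd) set \<Rightarrow> ((real ^ 'd) \<times> int) list \<Rightarrow> 'd \<Rightarrow> real ^ 'd \<Rightarrow> bool" where
  "candidate S hist j x \<longleftrightarrow>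
     x \<in> S \<and> x \<notin> fst ` set hist \<and> (\<forall>k\<in>neg_points hist. k $ j < x $ j)"

definition settled_coords :: "(real ^ 'd) set \<Rightarrow> ((real ^ 'd) \<times> int) list \<Rightarrow> 'd set" where
  "settled_coords S hist = {j. \<forall>x. \<not> candidate S hist j x}"

definition maximal_candidate :: "(real ^ 'd) set \<Rightarrow> ((real ^ 'd) \<times> int) list \<Rightarrow> 'd \<Rightarrow> real ^ 'd \<Rightarrow> bool" where
  "maximal_candidate S hist j x \<longleftrightarrow>
     candidate S hist j x \<and> (\<forall>y. candidate S hist j y \<longrightarrow> y $ j \<le> x $ j)"

definition fits_history :: "(real ^ 'd) set \<Rightarrow> ((real ^ 'd) \<times> int) list \<Rightarrow> (real ^ 'd \<Rightarrow> int) \<Rightarrow> bool" where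
  "fits_history S hist h \<longleftrightarrow> h \<in> H_box \<and>
     (\<forall>x\<in>S. (\<forall>l. (x, l) \<in> set hist \<longrightarrow> h x = l) \<and> (x \<notin> fst ` set hist \<longrightarrow> h x = -1))"

definition box_auditor :: "(real ^ 'd) set \<Rightarrow> (real ^ 'd, real ^ 'd \<Rightarrow> int) algorithm" where
  "box_auditor S hist =
     (if \<exists>j x. candidate S hist j x then Query (SOME x. \<exists>j. maximal_candidate S hist j x)
      else Output (SOME h. fits_history S hist h))"

lemma maximal_candidate_exists:
  assumes "finite S" and "candidate S hist j x"
  shows "\<exists>x. maximal_candidate S hist j x"
proof -
  have "finite {y. candidate S hist j y}"
    using assms(1) by (rule finite_subset[rotated]) (auto simp: candidate_def)
  moreover have "{y. candidate S hist j y} \<noteq> {}"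
    using assms(2) by blast
  ultimately obtain x where "is_arg_min (\<lambda>y. - y $ j) (\<lambda>y. y \<in> {y. candidate S hist j y}) x"
    using ex_is_arg_min_if_finite by blast
  then have "maximal_candidate S hist j x"
    unfolding is_arg_min_def maximal_candidate_def by auto
  then show ?thesis ..
qed

lemma settled_coords_mono: "settled_coords S hist \<subseteq> settled_coords S (hist @ [(x, l)])"
  unfolding settled_coords_def candidate_def neg_points_def by auto

lemma maximal_candidate_negative_settles:
  assumes "maximal_candidate S hist j x"
  shows "j \<notin> settled_coords S hist" and "j \<in> settled_coords S (hist @ [(x, -1)])"
proof -
  show "j \<notin> settled_coords S hist"
    using assms by (auto simp: settled_coords_def maximal_candidate_def)
  have "\<not> candidate S (hist @ [(x, -1)]) j y" for y
  proof
    assume y: "candidate S (hist @ [(x, -1)]) j y"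
    then have "x $ j < y $ j"
      by (auto simp: candidate_def neg_points_def)
    moreover have "candidate S hist j y"
      using y by (auto simp: candidate_def neg_points_def)
    then have "y $ j \<le> x $ j"
      using assms by (auto simp: maximal_candidate_def)
    ultimately show False by simp
  qed
  then show "j \<in> settled_coords S (hist @ [(x, -1)])"
    by (simp add: settled_coords_def)
qed

lemma card_neg_points_le_settled_step:
  assumes "maximal_candidate S hist j x"
    and "card (neg_points hist) \<le> card (settled_coords S hist)"
  shows "card (neg_points (hist @ [(x, l)])) \<le> card (settled_coords S (hist @ [(x, l)]))"
proof (cases "l = -1")
  case False
  then have "neg_points (hist @ [(x, l)]) = neg_points hist"
    by (auto simp: neg_points_def)
  moreover have "card (settled_coords S hist) \<le> card (settled_coords S (hist @ [(x, l)]))"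
    by (rule card_mono[OF finite settled_coords_mono])
  ultimately show ?thesis
    using assms(2) by simp
next
  case True
  have "x \<notin> neg_points hist"
    using assms(1) by (force simp: maximal_candidate_def candidate_def neg_points_def)
  moreover have "neg_points (hist @ [(x, l)]) = insert x (neg_points hist)"
    using True by (auto simp: neg_points_def)
  ultimately have "card (neg_points (hist @ [(x, l)])) = Suc (card (neg_points hist))"
    by (simp add: finite_neg_points)
  moreover have "insert j (settled_coords S hist) \<subseteq> settled_coords S (hist @ [(x, l)])"
    using maximal_candidate_negative_settles(2)[OF assms(1)] settled_coords_mono True by blast
  then have "card (insert j (settled_coords S hist)) \<le> card (settled_coords S (hist @ [(x, l)]))"
    by (rule card_mono[OF finite])
  then have "Suc (card (settled_coords S hist)) \<le> card (settled_coords S (hist @ [(x, l)]))"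
    using maximal_candidate_negative_settles(1)[OF assms(1)] by simp
  ultimately show ?thesis
    using assms(2) by simp
qed

definition history_invariant ::
    "(real ^ 'd) set \<Rightarrow> (real ^ 'd \<Rightarrow> int) \<Rightarrow> ((real ^ 'd) \<times> int) list \<Rightarrow> bool" where
  "history_invariant S L hist \<longleftrightarrow> fst ` set hist \<subseteq> S \<and> (\<forall>(x, l)\<in>set hist. l = L x) \<and>
     card (neg_points hist) \<le> card (settled_coords S hist)"

lemma history_invariant_snoc:
  assumes "maximal_candidate S hist j x" and "history_invariant S L hist"
  shows "history_invariant S L (hist @ [(x, L x)])"
proof -
  have "x \<in> S"
    using assms(1) by (simp add: maximal_candidate_def candidate_def)
  then show ?thesis
    using assms(2) card_neg_points_le_settled_step[OF assms(1)]
    by (auto simp: history_invariant_def)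
qed

lemma run_box_auditor:
  fixes S :: "(real ^ 'd) set"
  assumes "finite S" and "history_invariant S L hist"
  shows "\<exists>h hist'. run (box_auditor S) L (Suc (card (S - fst ` set hist))) hist = Some (h, hist') \<and>
    history_invariant S L hist' \<and> (\<forall>j x. \<not> candidate S hist' j x) \<and>
    h = (SOME h. fits_history S hist' h)"
  using assms(2)
proof (induction "card (S - fst ` set hist)" arbitrary: hist)
  case 0
  have "\<not> candidate S hist j x" for j x
    using 0 \<open>finite S\<close> by (auto simp: candidate_def)
  then show ?case
    using 0 by (auto simp: box_auditor_def)
next
  case (Suc n)
  show ?case
  proof (cases "\<exists>j x. candidate S hist j x")
    case False
    then show ?thesis
      using Suc.prems by (auto simp: box_auditor_def)
  next
    case True
    define x where "x = (SOME x. \<exists>j. maximal_candidate S hist j x)"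
    have "\<exists>x j. maximal_candidate S hist j x"
      using True maximal_candidate_exists[OF \<open>finite S\<close>] by blast
    then have "\<exists>j. maximal_candidate S hist j x"
      unfolding x_def by (rule someI_ex)
    then obtain j where max: "maximal_candidate S hist j x" ..
    then have x: "x \<in> S" "x \<notin> fst ` set hist"
      by (auto simp: maximal_candidate_def candidate_def)
    define hist' where "hist' = hist @ [(x, L x)]"
    have "S - fst ` set hist' = (S - fst ` set hist) - {x}"
      by (auto simp: hist'_def)
    with x Suc.hyps(2) \<open>finite S\<close> have unqueried: "n = card (S - fst ` set hist')"
      by (simp add: card_Diff_singleton)
    have "history_invariant S L hist'"
      unfolding hist'_def by (rule history_invariant_snoc[OF max Suc.prems])
    then have "\<exists>h hist''.
      run (box_auditor S) L (Suc (card (S - fst ` set hist'))) hist' = Some (h, hist'') \<and>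
      history_invariant S L hist'' \<and> (\<forall>j x. \<not> candidate S hist'' j x) \<and>
      h = (SOME h. fits_history S hist'' h)"
      by (rule Suc.hyps(1)[OF unqueried])
    then obtain h hist'' where
      run: "run (box_auditor S) L (Suc (card (S - fst ` set hist'))) hist' = Some (h, hist'')"
      and result: "history_invariant S L hist''" "\<forall>j x. \<not> candidate S hist'' j x"
        "h = (SOME h. fits_history S hist'' h)"
      by blast
    have "box_auditor S hist = Query x"
      using True by (simp add: box_auditor_def x_def)
    with run[folded unqueried] have "run (box_auditor S) L (Suc (Suc n)) hist = Some (h, hist'')"
      by (simp add: hist'_def)
    with result show ?thesis
      unfolding Suc.hyps(2)[symmetric] by blast
  qed
qed

lemma fits_history_h_box:
  fixes S :: "(real ^ 'd) set"
  assumes "\<forall>i. a $ i \<ge> 0" and "\<forall>x\<in>S. L x = h_box a x"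
    and "fst ` set hist \<subseteq> S" and "\<forall>(x, l)\<in>set hist. l = L x"
    and "\<forall>j x. \<not> candidate S hist j x"
  shows "fits_history S hist (h_box a)"
proof -
  have queried: "x \<in> S" "l = L x" if "(x, l) \<in> set hist" for x l
    using that assms(3,4) by force+
  have "h_box a \<in> H_box"
    unfolding H_box_def using assms(1) by blast
  moreover have "h_box a x = l" if "(x, l) \<in> set hist" for x l
    using queried[OF that] assms(2) by simp
  moreover have "h_box a x = -1" if x: "x \<in> S" "x \<notin> fst ` set hist" for x
  proof (rule ccontr)
    assume "h_box a x \<noteq> -1"
    then obtain i where "a $ i \<le> x $ i"
      by (auto simp: h_box_def split: if_splits)
    moreover have "\<not> candidate S hist i x"
      using assms(5) by blast
    then obtain k where k: "k \<in> neg_points hist" "x $ i \<le> k $ i"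
      using x by (auto simp: candidate_def not_less)
    ultimately have "h_box a k = 1"
      unfolding h_box_def by (metis order_trans)
    moreover have "(k, -1) \<in> set hist"
      using k(1) by (simp add: neg_points_def)
    then have "L k = h_box a k" "L k = -1"
      using queried assms(2) by simp_all
    ultimately show False
      by simp
  qed
  ultimately show ?thesis
    by (simp add: fits_history_def)
qed

lemma fits_history_unique:
  assumes "fits_history S hist h" and "fits_history S hist g" and "x \<in> S"
  shows "h x = g x"
proof (cases "x \<in> fst ` set hist")
  case True
  then obtain l where "(x, l) \<in> set hist"
    by force
  then show ?thesis
    using assms by (auto simp: fits_history_def)
next
  case False
  then show ?thesis
    using assms by (auto simp: fits_history_def)
qed

lemma box_auditor_audits:
  fixes S :: "(real ^ 'd) set"
  assumes "finite S" and "L \<in> consistent_labelings H_box S"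
  shows "\<exists>n h hist. run (box_auditor S) L n [] = Some (h, hist) \<and> set (map fst hist) \<subseteq> S \<and>
    h \<in> H_box \<and> (\<forall>x\<in>S. h x = L x) \<and> card (neg_points hist) \<le> CARD('d)"
proof -
  obtain a where a: "\<forall>i. a $ i \<ge> 0" and L: "\<forall>x\<in>S. L x = h_box a x"
    using assms(2) by (auto simp: consistent_labelings_def H_box_def)
  have "history_invariant S L []"
    by (simp add: history_invariant_def neg_points_def)
  from run_box_auditor[OF assms(1) this] obtain h hist
    where run: "run (box_auditor S) L (Suc (card S)) [] = Some (h, hist)"
    and inv: "history_invariant S L hist" and settled: "\<forall>j x. \<not> candidate S hist j x"
    and h: "h = (SOME h. fits_history S hist h)"
    by auto
  have hist: "fst ` set hist \<subseteq> S" "\<forall>(x, l)\<in>set hist. l = L x"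
    and cost: "card (neg_points hist) \<le> card (settled_coords S hist)"
    using inv by (simp_all add: history_invariant_def)
  have "fits_history S hist (h_box a)"
    by (rule fits_history_h_box[OF a L hist settled])
  then have "fits_history S hist h"
    unfolding h by (rule someI[where P = "fits_history S hist"])
  then have "h \<in> H_box" and "\<forall>x\<in>S. h x = L x"
    using fits_history_unique[OF _ \<open>fits_history S hist (h_box a)\<close>] L
    by (auto simp: fits_history_def)
  moreover have "card (settled_coords S hist) \<le> CARD('d)"
    by (rule card_mono) auto
  ultimately show ?thesis
    using run hist(1) cost
    by (intro exI[of _ "Suc (card S)"] exI[of _ h] exI[of _ hist]) auto
qed

theorem theorem3:
  fixes S_u :: "(real ^ 'd) set" and m :: nat
  assumes "finite S_u" and "card S_u = m"
    and "\<forall>x\<in>S_u. \<forall>i. x $ i \<ge> 0"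
  shows "auditing_complexity H_box S_u \<le> enat CARD('d)"
  using box_auditor_audits[OF assms(1)] by (rule auditing_complexity_le_enat)

end
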